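(* Let $\mathcal{A}=\{\alpha_1<\dots<\alpha_m\}\subset(0,1)$, $|\mathcal{A}|=m$, $d_{\mathcal{A}}=\min_{\alpha\in\mathcal{A}}\min(\alpha,1-\alpha)$. Let $(b_t)$ be base forecasts with $b_t\in\mathcal{K}$ and $(y_t)$ real outcomes with $|y_t-b_t^{\alpha}|\le R$ for all $\alpha\in\mathcal{A}$, all $t$, for some $R>0$. Run MultiQT with constant delay $D\ge0$, learning rate $\eta>0$ and initial hidden offset $\tilde\theta_1\in\mathcal{K}$. Then for every $T\ge1$ and every $\alpha\in\mathcal{A}$, $$\Bigg|\frac{1}{T}\sum_{t=1}^T \mathrm{cov}_t^{\alpha}-\alpha\Bigg|\le \frac{2\|\tilde\theta_1\|_2}{\eta T}+\sqrt{\frac{|\mathcal{A}|(2D+1)}{T}+\frac{2R|\mathcal{A}|^{3/2}}{\eta\, d_{\mathcal{A}}\,T}}+\frac{D|\mathcal{A}|^{1/2}}{T}.$$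
   Context: $\mathcal{K}=\{x\in\mathbb{R}^m:x_1\le\dots\le x_m\}$; $\Pi_C$ denotes Euclidean projection onto a closed convex set $C$, and $C-v=\{x-v:x\in C\}$. MultiQT with constant delay $D\ge0$: for $t=1,2,\dots$, set $\theta_t=\Pi_{\mathcal{K}-b_t}(\tilde\theta_t)$, output $q_t=b_t+\theta_t$ (equivalently $q_t=\Pi_{\mathcal{K}}(b_t+\tilde\theta_t)$), define $\mathrm{cov}_t^{\alpha}=\mathbb{1}\{y_t\le q_t^{\alpha}\}$, and update the hidden offset by $\tilde\theta_{t+1}^{\alpha}=\tilde\theta_t^{\alpha}-\eta(\mathrm{cov}_{t-D}^{\alpha}-\alpha)$ for $t>D$ and $\tilde\theta_{t+1}=\tilde\theta_t$ for $t\le D$ (the outcome $y_s$ becomes available only after the forecast at time $s+D$ is made). *)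

theory Defs
  imports "HOL-Analysis.Analysis"
begin

text \<open>The cone K of vectors with nondecreasing coordinates; coordinates are indexed by a
finite linearly ordered type whose order is the order alpha_1 < ... < alpha_m.\<close>
definition monoK :: "(real ^ 'n::{finite,linorder}) set" where
  "monoK = {x. \<forall>i j. i \<le> j \<longrightarrow> x $ i \<le> x $ j}"

definition mqt_theta :: "(nat \<Rightarrow> real ^ 'n::{finite,linorder}) \<Rightarrow> (nat \<Rightarrow> real ^ 'n::{finite,linorder}) \<Rightarrow> nat \<Rightarrow> real ^ 'n::{finite,linorder}" where
  "mqt_theta b th t = closest_point ((\<lambda>x. x - b t) ` monoK) (th t)"

definition mqt_q :: "(nat \<Rightarrow> real ^ 'n::{finite,linorder}) \<Rightarrow> (nat \<Rightarrow> real ^ 'n::{finite,linorder}) \<Rightarrow> nat \<Rightarrow> real ^ 'n::{finite,linorder}" where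
  "mqt_q b th t = b t + mqt_theta b th t"

definition mqt_cov :: "(nat \<Rightarrow> real) \<Rightarrow> (nat \<Rightarrow> real ^ 'n::{finite,linorder}) \<Rightarrow> (nat \<Rightarrow> real ^ 'n::{finite,linorder}) \<Rightarrow> nat \<Rightarrow> 'n::{finite,linorder} \<Rightarrow> real" where
  "mqt_cov y b th t a = (if y t \<le> mqt_q b th t $ a then 1 else 0)"

end

(*
  The hidden offset performs online gradient descent, with gradients delayed by D, on the
  vector of pinball losses; its gradient at time t is the coverage error cov_t - alpha.  The
  key inequality is <th_t, cov_t - alpha> >= -|A| R: at the projection theta_t of th_t onto
  K - b_t, moving a little in the direction alpha - cov_t stays inside K - b_t, so the
  projection inequality makes <th_t - theta_t, alpha - cov_t> non-positive, while
  theta_t^a (alpha - cov_t^a) <= R coordinatewise because |y_t - b_t^a| <= R.  Accounting for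
  the delay, each update increases |th|^2 by at most eta^2 |A| (2D + 1) + 2 eta |A| R, and
  telescoping the updates bounds eta times the summed coverage errors of the first T - D rounds
  by |th_1| + |th_(T+1)|.

  The argument yields the sharper term 2 R |A| / (eta T) under the square root, needs only
  alpha monotone with values in [0, 1], and does not use that b_t and th_1 lie in K.
*)
theory Submission
  imports Defs
begin

definition coverage :: "real \<Rightarrow> real ^ 'n \<Rightarrow> real ^ 'n" where
  "coverage y q = (\<chi> a. if y \<le> q $ a then 1 else 0)"

lemma closed_monoK: "closed monoK"
  unfolding monoK_def
  by (intro closed_Collect_all closed_Collect_imp closed_Collect_le continuous_intros) simp_all

lemma convex_monoK: "convex monoK"
  unfolding monoK_def convex_def
  by (auto intro!: add_mono mult_left_mono)

lemma translated_monoK_iff: "z \<in> (\<lambda>x. x - c) ` monoK \<longleftrightarrow> z + c \<in> monoK"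
proof
  assume "z + c \<in> monoK"
  then show "z \<in> (\<lambda>x. x - c) ` monoK"
    by (rule rev_image_eqI) simp
qed auto

lemma inner_closest_point_feasible_direction:
  fixes S :: "'a::euclidean_space set"
  assumes "convex S" "closed S" "\<epsilon> > 0" "closest_point S x + \<epsilon> *\<^sub>R v \<in> S"
  shows "inner (x - closest_point S x) v \<le> 0"
proof -
  have "\<epsilon> * inner (x - closest_point S x) v \<le> 0"
    using closest_point_dot[OF assms(1,2,4), of x] by simp
  then show ?thesis
    using assms(3) by (simp add: mult_le_0_iff)
qed

lemma abs_inner_le_card:
  fixes u w :: "real ^ 'n::finite"
  assumes "\<And>a. \<bar>u $ a\<bar> \<le> 1" "\<And>a. \<bar>w $ a\<bar> \<le> 1"
  shows "\<bar>inner u w\<bar> \<le> real CARD('n)"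
proof -
  have "\<bar>inner u w\<bar> \<le> (\<Sum>a\<in>UNIV. \<bar>u $ a * w $ a\<bar>)"
    unfolding inner_vec_def inner_real_def by (rule sum_abs)
  also have "\<dots> \<le> (\<Sum>a\<in>(UNIV::'n set). 1)"
    using assms by (intro sum_mono) (simp add: abs_mult mult_le_one)
  finally show ?thesis
    by simp
qed

text \<open>Moving from a monotone \<open>q\<close> towards \<open>alpha - coverage y q\<close> keeps monotonicity for a
  short while: the direction can break the order of two coordinates only across the threshold
  \<open>y\<close>, where \<open>q\<close> has a strictly positive gap.\<close>
lemma monoK_add_coverage_direction:
  fixes q :: "real ^ 'n::{finite,linorder}" and alpha :: "'n \<Rightarrow> real"
  assumes q: "q \<in> monoK" and alpha: "mono alpha"
  shows "\<exists>\<epsilon>>0. q + \<epsilon> *\<^sub>R ((\<chi> a. alpha a) - coverage y q) \<in> monoK"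
proof -
  define v where "v = (\<chi> a. alpha a) - coverage y q"
  have "\<forall>\<^sub>F \<epsilon> in at_right 0. i \<le> j \<longrightarrow> (q + \<epsilon> *\<^sub>R v) $ i \<le> (q + \<epsilon> *\<^sub>R v) $ j" for i j
  proof (cases "i \<le> j")
    case True
    have "q $ i \<le> q $ j" "alpha i \<le> alpha j"
      using q alpha True by (auto simp: monoK_def mono_def)
    show ?thesis
    proof (cases "coverage y q $ i = coverage y q $ j")
      case True
      have "(q + \<epsilon> *\<^sub>R v) $ i \<le> (q + \<epsilon> *\<^sub>R v) $ j" if "\<epsilon> > 0" for \<epsilon>
        using True that \<open>q $ i \<le> q $ j\<close> \<open>alpha i \<le> alpha j\<close>
        by (simp add: v_def add_mono mult_left_mono)
      then show ?thesis
        by (auto intro: eventually_mono[OF eventually_at_right_less])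
    next
      case False
      then have gap: "q $ i < y" "y \<le> q $ j"
        using \<open>q $ i \<le> q $ j\<close> by (auto simp: coverage_def split: if_splits)
      have "(q + \<epsilon> *\<^sub>R v) $ i \<le> (q + \<epsilon> *\<^sub>R v) $ j" if "0 < \<epsilon>" "\<epsilon> < q $ j - q $ i" for \<epsilon>
      proof -
        have "\<epsilon> * alpha i \<le> \<epsilon> * alpha j"
          using that \<open>alpha i \<le> alpha j\<close> by (simp add: mult_left_mono)
        moreover have "(q + \<epsilon> *\<^sub>R v) $ i = q $ i + \<epsilon> * alpha i"
          and "(q + \<epsilon> *\<^sub>R v) $ j = q $ j + \<epsilon> * alpha j - \<epsilon>"
          using gap by (simp_all add: v_def coverage_def algebra_simps)
        ultimately show ?thesis
          using that by linarith
      qed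
      then show ?thesis
        using gap by (intro eventually_at_rightI[of 0 "q $ j - q $ i"]) auto
    qed
  qed auto
  then have "\<forall>\<^sub>F \<epsilon> in at_right 0. \<epsilon> > 0 \<and> q + \<epsilon> *\<^sub>R v \<in> monoK"
    unfolding monoK_def
    by (intro eventually_conj eventually_at_right_less) (simp add: eventually_all_finite)
  then show ?thesis
    unfolding v_def using eventually_happens'[OF trivial_limit_at_right_real] by blast
qed

lemma offset_times_coverage_gap_le:
  fixes \<theta> c y alpha R :: real
  assumes "0 \<le> alpha" "alpha \<le> 1" "\<bar>y - c\<bar> \<le> R"
  shows "\<theta> * (alpha - (if y \<le> c + \<theta> then 1 else 0)) \<le> R"
proof (cases "y \<le> c + \<theta>")
  case True
  then have "- \<theta> * (1 - alpha) \<le> R * (1 - alpha)"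
    using assms by (intro mult_right_mono) auto
  also have "\<dots> \<le> R"
    using assms by (simp add: mult_left_le)
  finally show ?thesis
    using True by (simp add: algebra_simps)
next
  case False
  then have "\<theta> * alpha \<le> R * alpha"
    using assms by (intro mult_right_mono) auto
  also have "\<dots> \<le> R"
    using assms by (simp add: mult_left_le)
  finally show ?thesis
    using False by simp
qed

lemma inner_offset_coverage_ge:
  fixes x c :: "real ^ 'n::{finite,linorder}" and alpha :: "'n \<Rightarrow> real"
  assumes alpha: "mono alpha" "\<And>a. 0 \<le> alpha a" "\<And>a. alpha a \<le> 1"
    and bounded: "\<And>a. \<bar>y - c $ a\<bar> \<le> R"
  shows "inner x (coverage y (c + closest_point ((\<lambda>z. z - c) ` monoK) x) - (\<chi> a. alpha a))
           \<ge> - (real CARD('n) * R)"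
proof -
  define S where "S = (\<lambda>z. z - c) ` monoK"
  define \<theta> where "\<theta> = closest_point S x"
  define v where "v = (\<chi> a. alpha a) - coverage y (c + \<theta>)"
  have "closed S" "convex S"
    unfolding S_def by (simp_all add: closed_translation_subtract closed_monoK convex_monoK)
  have "0 \<in> monoK"
    by (simp add: monoK_def)
  then have "S \<noteq> {}"
    unfolding S_def by blast
  then have "c + \<theta> \<in> monoK"
    using closest_point_in_set[OF \<open>closed S\<close>] unfolding \<theta>_def S_def translated_monoK_iff
    by (simp add: add.commute)
  then obtain \<epsilon> where "\<epsilon> > 0" "(c + \<theta>) + \<epsilon> *\<^sub>R v \<in> monoK"
    using monoK_add_coverage_direction[OF _ alpha(1)] unfolding v_def by blast
  then have "\<theta> + \<epsilon> *\<^sub>R v \<in> S"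
    unfolding S_def translated_monoK_iff by (simp add: algebra_simps)
  then have "inner (x - \<theta>) v \<le> 0"
    unfolding \<theta>_def using \<open>closed S\<close> \<open>convex S\<close> \<open>\<epsilon> > 0\<close>
    by (intro inner_closest_point_feasible_direction)
  moreover have "inner \<theta> v \<le> real CARD('n) * R"
  proof -
    have "inner \<theta> v = (\<Sum>a\<in>UNIV. \<theta> $ a * (alpha a - (if y \<le> c $ a + \<theta> $ a then 1 else 0)))"
      by (simp add: inner_vec_def v_def coverage_def)
    also have "\<dots> \<le> (\<Sum>a\<in>(UNIV::'n set). R)"
      using alpha bounded by (intro sum_mono offset_times_coverage_gap_le)
    finally show ?thesis
      by simp
  qed
  ultimately have "inner x v \<le> real CARD('n) * R"
    by (simp add: inner_diff_left)
  then show ?thesis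
    unfolding v_def S_def \<theta>_def by (simp add: inner_diff_right)
qed

lemma le_powr_three_halves_div:
  fixes m d :: real
  assumes "1 \<le> m" "0 < d" "d \<le> 1"
  shows "m \<le> m powr (3/2) / d"
proof -
  have "m = m powr 1"
    using assms by simp
  also have "\<dots> \<le> m powr (3/2)"
    using assms by (intro powr_mono) auto
  also have "\<dots> \<le> m powr (3/2) / d"
    using assms by (simp add: le_divide_eq mult_left_le)
  finally show ?thesis .
qed

locale multiqt =
  fixes alpha :: "'n::{finite,linorder} \<Rightarrow> real"
    and b :: "nat \<Rightarrow> real ^ 'n::{finite,linorder}" and y :: "nat \<Rightarrow> real"
    and R eta :: real and D :: nat and th :: "nat \<Rightarrow> real ^ 'n::{finite,linorder}"
  assumes alpha_mono: "mono alpha"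
    and alpha_nonneg: "0 \<le> alpha a" and alpha_le_1: "alpha a \<le> 1"
    and bounded: "t \<ge> 1 \<Longrightarrow> \<bar>y t - b t $ a\<bar> \<le> R"
    and eta_pos: "eta > 0"
    and delay_phase: "1 \<le> t \<Longrightarrow> t \<le> D \<Longrightarrow> th (Suc t) = th t"
    and update: "t > D \<Longrightarrow> th (Suc t) = th t - eta *\<^sub>R (\<chi> a. mqt_cov y b th (t - D) a - alpha a)"
begin

definition coverage_gap :: "nat \<Rightarrow> real ^ 'n::{finite,linorder}" where
  "coverage_gap t = (\<chi> a. mqt_cov y b th t a - alpha a)"

definition growth :: real where
  "growth = real CARD('n) * (2 * real D + 1 + 2 * R / eta)"

lemma abs_coverage_gap_le_1: "\<bar>coverage_gap t $ a\<bar> \<le> 1"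
  using alpha_nonneg[of a] alpha_le_1[of a] by (simp add: coverage_gap_def mqt_cov_def)

lemma abs_inner_coverage_gap_le: "\<bar>inner (coverage_gap s) (coverage_gap t)\<bar> \<le> real CARD('n)"
  by (intro abs_inner_le_card abs_coverage_gap_le_1)

lemma inner_offset_coverage_gap_ge:
  assumes "t \<ge> 1"
  shows "inner (th t) (coverage_gap t) \<ge> - (real CARD('n) * R)"
proof -
  have "coverage_gap t
      = coverage (y t) (b t + closest_point ((\<lambda>z. z - b t) ` monoK) (th t)) - (\<chi> a. alpha a)"
    by (simp add: coverage_gap_def coverage_def mqt_cov_def mqt_q_def mqt_theta_def vec_eq_iff)
  then show ?thesis
    using alpha_mono alpha_nonneg alpha_le_1 bounded[OF assms]
    by (simp add: inner_offset_coverage_ge)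
qed

lemma offset_eq_sum: "th (Suc n) = th 1 - eta *\<^sub>R (\<Sum>s=1..n-D. coverage_gap s)"
proof (induction n)
  case 0
  then show ?case
    by simp
next
  case (Suc n)
  show ?case
  proof (cases "n < D")
    case True
    then show ?thesis
      using Suc delay_phase[of "Suc n"] by simp
  next
    case False
    then have "th (Suc (Suc n)) = th (Suc n) - eta *\<^sub>R coverage_gap (Suc (n - D))"
      using update[of "Suc n"] by (simp add: coverage_gap_def Suc_diff_le)
    also have "\<dots> = th 1 - eta *\<^sub>R ((\<Sum>s=1..n-D. coverage_gap s) + coverage_gap (Suc (n - D)))"
      using Suc.IH by (simp add: scaleR_right_distrib)
    also have "\<dots> = th 1 - eta *\<^sub>R (\<Sum>s=1..Suc n - D. coverage_gap s)"
      using False by (simp add: Suc_diff_le)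
    finally show ?thesis .
  qed
qed

lemma offset_lag:
  "th (Suc (n + D)) = th (Suc n) - eta *\<^sub>R (\<Sum>s\<in>{n-D<..n}. coverage_gap s)"
proof -
  have "{1..n} = {1..n-D} \<union> {n-D<..n}" "{1..n-D} \<inter> {n-D<..n} = {}"
    by auto
  then have "th (Suc (n + D))
      = th 1 - eta *\<^sub>R ((\<Sum>s=1..n-D. coverage_gap s) + (\<Sum>s\<in>{n-D<..n}. coverage_gap s))"
    using offset_eq_sum[of "n + D"] by (simp add: sum.union_disjoint)
  also have "\<dots> = th (Suc n) - eta *\<^sub>R (\<Sum>s\<in>{n-D<..n}. coverage_gap s)"
    using offset_eq_sum[of n] by (simp add: scaleR_right_distrib)
  finally show ?thesis .
qed

text \<open>The delayed update uses the feedback of time \<open>n + 1\<close> at the offset of time \<open>n + D + 1\<close>;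
  the two offsets differ by at most \<open>D\<close> steps of size \<open>eta\<close>, which costs \<open>eta D |A|\<close>.\<close>
lemma norm_offset_step:
  "(norm (th (Suc (Suc n + D))))\<^sup>2 \<le> (norm (th (Suc (n + D))))\<^sup>2 + eta\<^sup>2 * growth"
proof -
  define m where "m = real CARD('n)"
  define x where "x = th (Suc (n + D))"
  define w where "w = coverage_gap (Suc n)"
  define lag where "lag = (\<Sum>s\<in>{n-D<..n}. coverage_gap s)"
  have step: "th (Suc (Suc n + D)) = x - eta *\<^sub>R w"
    using update[of "Suc (n + D)"] by (simp add: x_def w_def coverage_gap_def)
  have "\<bar>inner lag w\<bar> \<le> (\<Sum>s\<in>{n-D<..n}. \<bar>inner (coverage_gap s) w\<bar>)"
    unfolding lag_def inner_sum_left by (rule sum_abs)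
  also have "\<dots> \<le> (\<Sum>s\<in>{n-D<..n}. m)"
    unfolding w_def m_def by (intro sum_mono abs_inner_coverage_gap_le)
  also have "\<dots> \<le> real D * m"
    by (simp add: m_def)
  finally have "\<bar>inner lag w\<bar> \<le> real D * m" .
  moreover have "inner x w = inner (th (Suc n)) w - eta * inner lag w"
    unfolding x_def lag_def offset_lag by (simp add: inner_diff_left)
  moreover have "inner (th (Suc n)) w \<ge> - (m * R)"
    unfolding w_def m_def by (intro inner_offset_coverage_gap_ge) simp
  ultimately have "- inner x w \<le> m * R + eta * (real D * m)"
    using eta_pos by (smt (verit) abs_le_iff mult_left_mono)
  moreover have "inner w w \<le> m"
    using abs_inner_coverage_gap_le[of "Suc n" "Suc n"] by (simp add: w_def m_def)
  ultimately have "2 * eta * (- inner x w) + eta\<^sup>2 * inner w w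
      \<le> 2 * eta * (m * R + eta * (real D * m)) + eta\<^sup>2 * m"
    using eta_pos by (intro add_mono mult_left_mono) auto
  also have "\<dots> = eta\<^sup>2 * growth"
    using eta_pos by (simp add: growth_def m_def field_simps power2_eq_square)
  finally show ?thesis
    unfolding step x_def[symmetric] power2_norm_eq_inner
    by (simp add: inner_diff_left inner_diff_right inner_commute algebra_simps power2_eq_square)
qed

lemma norm_offset_le:
  "(norm (th (Suc (n + D))))\<^sup>2 \<le> (norm (th 1))\<^sup>2 + real n * eta\<^sup>2 * growth"
proof (induction n)
  case 0
  then show ?case
    using offset_eq_sum[of D] by simp
next
  case (Suc n)
  then show ?case
    using norm_offset_step[of n] by (simp add: algebra_simps)
qed

lemma R_nonneg: "R \<ge> 0"
  using bounded[of 1 undefined] by linarith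

lemma growth_nonneg: "growth \<ge> 0"
  using R_nonneg eta_pos by (simp add: growth_def)

lemma growth_le:
  assumes "0 < d" "d \<le> 1"
  shows "growth \<le> real CARD('n) * (2 * real D + 1) + 2 * R * real CARD('n) powr (3/2) / (eta * d)"
proof -
  have "2 * R / eta * real CARD('n) \<le> 2 * R / eta * (real CARD('n) powr (3/2) / d)"
    using assms R_nonneg eta_pos by (intro mult_left_mono le_powr_three_halves_div) auto
  then show ?thesis
    by (simp add: growth_def algebra_simps)
qed

lemma norm_offset_le_sqrt: "norm (th (Suc (n + D))) \<le> norm (th 1) + eta * sqrt (real n * growth)"
proof -
  have "norm (th (Suc (n + D))) \<le> sqrt ((norm (th 1))\<^sup>2 + real n * eta\<^sup>2 * growth)"
    by (rule real_le_rsqrt[OF norm_offset_le])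
  also have "\<dots> \<le> sqrt ((norm (th 1))\<^sup>2) + sqrt (real n * eta\<^sup>2 * growth)"
    using growth_nonneg by (intro sqrt_add_le_add_sqrt) auto
  also have "\<dots> = norm (th 1) + eta * sqrt (real n * growth)"
    using eta_pos by (simp add: real_sqrt_mult)
  finally show ?thesis .
qed

lemma abs_sum_coverage_gap_le_norms:
  "eta * \<bar>\<Sum>t=1..n. coverage_gap t $ a\<bar> \<le> norm (th 1) + norm (th (Suc (n + D)))"
proof -
  have "eta *\<^sub>R (\<Sum>t=1..n. coverage_gap t) = th 1 - th (Suc (n + D))"
    using offset_eq_sum[of "n + D"] by simp
  then have "(eta *\<^sub>R (\<Sum>t=1..n. coverage_gap t)) $ a = (th 1 - th (Suc (n + D))) $ a"
    by (rule arg_cong)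
  then have "eta * (\<Sum>t=1..n. coverage_gap t $ a) = th 1 $ a - th (Suc (n + D)) $ a"
    by (simp add: sum_component)
  then have "eta * \<bar>\<Sum>t=1..n. coverage_gap t $ a\<bar> = \<bar>th 1 $ a - th (Suc (n + D)) $ a\<bar>"
    using eta_pos by (metis abs_mult abs_of_pos)
  also have "\<dots> \<le> norm (th 1) + norm (th (Suc (n + D)))"
    by (intro order_trans[OF abs_triangle_ineq4] add_mono component_le_norm_cart)
  finally show ?thesis .
qed

text \<open>Only the first \<open>T - D\<close> coverage errors have entered the offset by time \<open>T + 1\<close>;
  the last \<open>D\<close> are bounded crudely by \<open>1\<close> each.\<close>
lemma abs_sum_coverage_gap_le:
  "\<bar>\<Sum>t=1..T. coverage_gap t $ a\<bar> \<le> 2 * norm (th 1) / eta + sqrt (real T * growth) + real D"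
proof -
  have "eta * \<bar>\<Sum>t=1..T-D. coverage_gap t $ a\<bar> \<le> 2 * norm (th 1) + eta * sqrt (real (T - D) * growth)"
    using abs_sum_coverage_gap_le_norms[where n = "T - D" and a = a] norm_offset_le_sqrt[of "T - D"] by linarith
  also have "\<dots> \<le> 2 * norm (th 1) + eta * sqrt (real T * growth)"
    using eta_pos growth_nonneg by (simp add: mult_right_mono)
  finally have head: "\<bar>\<Sum>t=1..T-D. coverage_gap t $ a\<bar> \<le> 2 * norm (th 1) / eta + sqrt (real T * growth)"
    using eta_pos by (simp add: field_simps)
  have "\<bar>\<Sum>t\<in>{T-D<..T}. coverage_gap t $ a\<bar> \<le> (\<Sum>t\<in>{T-D<..T}. 1)"
    by (intro order_trans[OF sum_abs] sum_mono abs_coverage_gap_le_1)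
  then have tail: "\<bar>\<Sum>t\<in>{T-D<..T}. coverage_gap t $ a\<bar> \<le> real D"
    by simp
  have "{1..T} = {1..T-D} \<union> {T-D<..T}" "{1..T-D} \<inter> {T-D<..T} = {}"
    by auto
  then have "(\<Sum>t=1..T. coverage_gap t $ a)
      = (\<Sum>t=1..T-D. coverage_gap t $ a) + (\<Sum>t\<in>{T-D<..T}. coverage_gap t $ a)"
    by (simp add: sum.union_disjoint)
  then show ?thesis
    using head tail by linarith
qed

lemma coverage_error_le:
  assumes "T \<ge> 1"
  shows "\<bar>(\<Sum>t=1..T. mqt_cov y b th t a) / real T - alpha a\<bar>
    \<le> 2 * norm (th 1) / (eta * real T) + sqrt (growth / real T) + real D / real T"
proof -
  have T: "real T > 0"
    using assms by simp
  have "(\<Sum>t=1..T. mqt_cov y b th t a) / real T - alpha a = (\<Sum>t=1..T. coverage_gap t $ a) / real T"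
    using T by (simp add: coverage_gap_def sum_subtractf field_simps)
  then have "\<bar>(\<Sum>t=1..T. mqt_cov y b th t a) / real T - alpha a\<bar> = \<bar>\<Sum>t=1..T. coverage_gap t $ a\<bar> / real T"
    by simp
  also have "\<dots> \<le> (2 * norm (th 1) / eta + sqrt (real T * growth) + real D) / real T"
    using T by (intro divide_right_mono abs_sum_coverage_gap_le) simp
  also have "\<dots> = 2 * norm (th 1) / (eta * real T) + sqrt (real T * growth) / real T + real D / real T"
    by (simp add: add_divide_distrib)
  also have "sqrt (real T * growth) / real T = sqrt (growth / real T)"
  proof -
    have "growth / real T = real T * growth / (real T)\<^sup>2"
      using T by (simp add: power2_eq_square)
    then show ?thesis
      using T by (simp add: real_sqrt_divide)
  qed
  finally show ?thesis .
qed

end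

theorem proposition7:
  fixes alpha :: "'n::{finite,linorder} \<Rightarrow> real"
    and b :: "nat \<Rightarrow> real ^ 'n::{finite,linorder}" and y :: "nat \<Rightarrow> real"
    and R eta :: real and D :: nat and th :: "nat \<Rightarrow> real ^ 'n::{finite,linorder}"
  assumes alpha_mono: "strict_mono alpha"
    and alpha_range: "\<forall>a. 0 < alpha a \<and> alpha a < 1"
    and b_in_K: "\<forall>t\<ge>1. b t \<in> monoK"
    and R_pos: "R > 0"
    and bounded: "\<forall>t\<ge>1. \<forall>a. \<bar>y t - b t $ a\<bar> \<le> R"
    and eta_pos: "eta > 0"
    and init: "th 1 \<in> monoK"
    and delay_phase: "\<forall>t. 1 \<le> t \<and> t \<le> D \<longrightarrow> th (Suc t) = th t"
    and update: "\<forall>t>D. th (Suc t) = th t - eta *\<^sub>R (\<chi> a. mqt_cov y b th (t - D) a - alpha a)"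
  shows "\<forall>T\<ge>1. \<forall>a.
    \<bar>(\<Sum>t=1..T. mqt_cov y b th t a) / real T - alpha a\<bar>
      \<le> 2 * norm (th 1) / (eta * real T)
        + sqrt (real CARD('n::{finite,linorder}) * (2 * real D + 1) / real T
                + 2 * R * real CARD('n::{finite,linorder}) powr (3/2)
                  / (eta * (Min (range (\<lambda>a. min (alpha a) (1 - alpha a)))) * real T))
        + real D * sqrt (real CARD('n::{finite,linorder})) / real T"
proof -
  interpret multiqt alpha b y R eta D th
    using assms by unfold_locales (auto intro: strict_mono_mono less_imp_le)
  define d where "d = Min (range (\<lambda>a. min (alpha a) (1 - alpha a)))"
  have "0 < d"
    unfolding d_def using alpha_range by (simp add: Min_gr_iff)
  moreover have "d \<le> 1"
    unfolding d_def using alpha_range by (intro Min.coboundedI[THEN order_trans]) auto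
  ultimately have "growth / real T
      \<le> (real CARD('n) * (2 * real D + 1) + 2 * R * real CARD('n) powr (3/2) / (eta * d)) / real T"
    for T by (simp add: divide_right_mono growth_le)
  then have growth: "growth / real T
      \<le> real CARD('n) * (2 * real D + 1) / real T
        + 2 * R * real CARD('n) powr (3/2) / (eta * d * real T)" for T
    by (simp add: add_divide_distrib)
  have delay: "real D / real T \<le> real D * sqrt (real CARD('n)) / real T" for T
    by (simp add: divide_right_mono mult_le_cancel_left1)
  show ?thesis
  proof (intro allI impI, goal_cases)
    case (1 T a)
    then show ?case
      using coverage_error_le[of T a] real_sqrt_le_mono[OF growth[of T]] delay[of T]
      unfolding d_def by linarith
  qed
qed

end
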